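(* Let $s,t\in\mathbb N$, $d=\gcd(s,t)$, $m=\mathrm{lcm}(s,t)$. Let $\sigma$ be an $s$-core and $\tau$ a $t$-core with $\mathrm{core}_d(\sigma)=\mathrm{core}_d(\tau)$, and put $\ell_0=\max(\ell(\sigma),\ell(\tau))$. Then for each integer $i\ge\ell_0$ and each $0\le j<d$ there exist an $\frac sd$-core $\sigma^i_j$, a $\frac td$-core $\tau^i_j$ and a nonnegative integer $\ell^i_j$ such that for all integers $k\ge0$, $$N_{\sigma,\tau}(i+mk)=\prod_{j=0}^{d-1}N_{\sigma^i_j,\tau^i_j}\!\left(\ell^i_j+\tfrac md k\right).$$
   Context: A partition $\lambda=(a_1,\dots,a_\ell)$ is a weakly decreasing finite sequence of positive integers; $\ell(\lambda)=\ell$ is its length. For $t\in\mathbb N$, a $t$-core is a partition whose Young diagram has no hook of size $t$; $\mathcal C_t$ is the set of $t$-cores; $\mathrm{core}_t\lambda$ is obtained from $\lambda$ by successively removing rim hooks (border strips) of size $t$ until none remain. For positive integers $u,v$, a $u$-core $\alpha$, a $v$-core $\gamma$ and an integer $k\ge0$, $N_{\alpha,\gamma}(k)=\#\{\lambda\in\mathcal C_{\mathrm{lcm}(u,v)}:\mathrm{core}_u\lambda=\alpha,\ \mathrm{core}_v\lambda=\gamma,\ \ell(\lambda)\le k\}$. (On the left side $u=s$, $v=t$; on the right side $u=s/d$, $v=t/d$, so $\mathrm{lcm}(u,v)=m/d$.) *)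

theory Defs
  imports Main
begin

definition partition :: "nat list \<Rightarrow> bool" where
  "partition lam \<longleftrightarrow> (\<forall>x\<in>set lam. 0 < x) \<and> sorted_wrt (\<ge>) lam"

definition diagram :: "nat list \<Rightarrow> (nat \<times> nat) set" where
  "diagram lam = {(i, j). i < length lam \<and> j < lam ! i}"

definition conj_part :: "nat list \<Rightarrow> nat \<Rightarrow> nat" where
  "conj_part lam j = length (filter (\<lambda>x. j < x) lam)"

definition hook_len :: "nat list \<Rightarrow> nat \<Rightarrow> nat \<Rightarrow> nat" where
  "hook_len lam i j = (lam ! i - j - 1) + (conj_part lam j - i - 1) + 1"

definition is_core :: "nat \<Rightarrow> nat list \<Rightarrow> bool" where
  "is_core t lam \<longleftrightarrow> partition lam \<and> (\<forall>(i, j)\<in>diagram lam. hook_len lam i j \<noteq> t)"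

definition cell_adj :: "nat \<times> nat \<Rightarrow> nat \<times> nat \<Rightarrow> bool" where
  "cell_adj a b \<longleftrightarrow> (fst a = fst b \<and> (snd a = Suc (snd b) \<or> snd b = Suc (snd a)))
                   \<or> (snd a = snd b \<and> (fst a = Suc (fst b) \<or> fst b = Suc (fst a)))"

definition cells_connected :: "(nat \<times> nat) set \<Rightarrow> bool" where
  "cells_connected S \<longleftrightarrow>
     (\<forall>a\<in>S. \<forall>b\<in>S. (\<lambda>x y. x \<in> S \<and> y \<in> S \<and> cell_adj x y)\<^sup>*\<^sup>* a b)"

definition no_2x2 :: "(nat \<times> nat) set \<Rightarrow> bool" where
  "no_2x2 S \<longleftrightarrow> \<not> (\<exists>i j. (i, j) \<in> S \<and> (Suc i, j) \<in> S \<and> (i, Suc j) \<in> S \<and> (Suc i, Suc j) \<in> S)"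

definition removes_rim_hook :: "nat \<Rightarrow> nat list \<Rightarrow> nat list \<Rightarrow> bool" where
  "removes_rim_hook t lam \<mu> \<longleftrightarrow> partition \<mu> \<and> diagram \<mu> \<subseteq> diagram lam \<and>
     (let S = diagram lam - diagram \<mu> in
        S \<noteq> {} \<and> card S = t \<and> cells_connected S \<and> no_2x2 S)"

definition core :: "nat \<Rightarrow> nat list \<Rightarrow> nat list" where
  "core t lam = (THE \<mu>. (removes_rim_hook t)\<^sup>*\<^sup>* lam \<mu> \<and> is_core t \<mu>)"

definition N_count :: "nat \<Rightarrow> nat \<Rightarrow> nat list \<Rightarrow> nat list \<Rightarrow> nat \<Rightarrow> nat" where
  "N_count u v \<alpha> \<gamma> k = card {lam. is_core (lcm u v) lam \<and> core u lam = \<alpha> \<and> core v lam = \<gamma>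
                               \<and> length lam \<le> k}"

end

theory Submission
  imports Defs "HOL-Library.FuncSet"
begin

text \<open>
  Encode a partition with at most L parts by its L beads on James' abacus. A hook of length t
  is a bead x with the position x - t empty, and removing a rim t-hook moves that bead to
  x - t. Hence lam is a t-core iff its bead set is closed under x \<mapsto> x - t, and core t lam
  is obtained by pushing every bead as far as possible towards 0 along its runner modulo t.

  Write s = d u and t = d v with d = gcd s t, so that lcm s t = d lcm u v. Runner j of the
  d-abacus is itself an abacus, and the (d u)-, (d v)- and (d lcm u v)-abacus structures
  restrict to the u-, v- and lcm u v-structures on every runner. So N_count s t \<sigma> \<tau> L
  factors over the d runners, runner j contributing the analogous count for u and v and the
  d-quotients of \<sigma> and \<tau> on that runner. Equal d-cores give \<sigma> and \<tau> equally many beads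
  on each runner, and adding lcm s t k beads adds lcm u v k beads to every runner without
  changing the quotients.
\<close>

section \<open>Partitions as row-length functions\<close>

definition part :: "nat list \<Rightarrow> nat \<Rightarrow> nat" where
  "part lam r = (if r < length lam then lam ! r else 0)"

lemma antimono_part: "partition lam \<Longrightarrow> antimono (part lam)"
  unfolding partition_def part_def sorted_wrt_iff_nth_less
  by (intro antimonoI) (auto simp: le_less)

lemma part_pos_iff: "partition lam \<Longrightarrow> 0 < part lam r \<longleftrightarrow> r < length lam"
  unfolding partition_def part_def by auto

lemma part_eq_0: "length lam \<le> r \<Longrightarrow> part lam r = 0"
  by (simp add: part_def)

lemma partition_eqI: "partition lam \<Longrightarrow> partition mu \<Longrightarrow> part lam = part mu \<Longrightarrow> lam = mu"
  by (metis linorder_neqE_nat nth_equalityI part_def part_pos_iff less_irrefl)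

lemma diagram_part: "diagram lam = {(r, c). c < part lam r}"
  unfolding diagram_def part_def by (auto split: if_splits)

lemma diagram_eq_Sigma: "length lam \<le> L \<Longrightarrow> diagram lam = Sigma {..<L} (\<lambda>r. {..<part lam r})"
  by (auto simp: diagram_part part_def split: if_splits)

lemma finite_diagram [simp]: "finite (diagram lam)"
  by (simp add: diagram_eq_Sigma[OF order_refl])

lemma card_diagram: "length lam \<le> L \<Longrightarrow> card (diagram lam) = (\<Sum>r<L. part lam r)"
  by (simp add: diagram_eq_Sigma card_SigmaI)

lemma conj_part_eq_card: "conj_part lam c = card {r. c < part lam r}"
proof -
  have "{r. r < length lam \<and> c < lam ! r} = {r. c < part lam r}"
    by (auto simp: part_def split: if_splits)
  then show ?thesis by (simp add: conj_part_def length_filter_conv_card)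
qed

lemma conj_part_le_length: "conj_part lam c \<le> length lam"
  unfolding conj_part_def by simp

lemma down_closed_eq_lessThan:
  fixes S :: "nat set"
  assumes "finite S" "\<And>r r'. r \<in> S \<Longrightarrow> r' \<le> r \<Longrightarrow> r' \<in> S"
  shows "S = {..<card S}"
proof (cases "S = {}")
  case False
  then have "S = {..Max S}"
    using assms(1) assms(2)[OF Max_in[OF assms(1)]] by (auto intro: Max_ge)
  then show ?thesis by (metis card_atMost lessThan_Suc_atMost)
qed simp

lemma antimono_Collect_less_eq_lessThan:
  fixes f :: "nat \<Rightarrow> nat"
  assumes "antimono f" and "\<And>r. N \<le> r \<Longrightarrow> f r \<le> c"
  shows "{r. c < f r} = {..<card {r. c < f r}}"
proof (rule down_closed_eq_lessThan)
  show "finite {r. c < f r}"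
    by (rule finite_subset[of _ "{..<N}"]) (auto, metis assms(2) not_le leD)
qed (use antimonoD[OF assms(1)] in \<open>fastforce\<close>)

lemma less_part_iff_less_conj_part:
  assumes "partition lam"
  shows "c < part lam r \<longleftrightarrow> r < conj_part lam c"
proof -
  have "{r. c < part lam r} = {..<card {r. c < part lam r}}"
    by (rule antimono_Collect_less_eq_lessThan[where N="length lam"])
       (auto simp: antimono_part[OF assms] part_eq_0)
  then show ?thesis by (metis conj_part_eq_card lessThan_iff mem_Collect_eq)
qed

lemma hook_len_part:
  "partition lam \<Longrightarrow> (i, j) \<in> diagram lam \<Longrightarrow>
    hook_len lam i j = part lam i - j + conj_part lam j - i - 1"
  unfolding hook_len_def diagram_part using less_part_iff_less_conj_part[of lam j i]
  by (auto simp: part_def split: if_splits)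

lemma ex_partition_part:
  assumes "antimono q" "\<And>r. L \<le> r \<Longrightarrow> q r = 0"
  shows "\<exists>mu. partition mu \<and> part mu = q \<and> length mu \<le> L"
proof -
  define n where "n = card {r. 0 < q r}"
  have "{r. 0 < q r} = {..<n}" unfolding n_def
    by (rule antimono_Collect_less_eq_lessThan[where N=L]) (simp_all add: assms)
  then have pos: "0 < q r \<longleftrightarrow> r < n" for r by blast
  define mu where "mu = map q [0..<n]"
  have "n \<le> L" using pos[of L] assms(2) by simp
  moreover have "part mu = q"
  proof
    fix r show "part mu r = q r"
      using pos[of r] by (cases "r < n") (simp_all add: part_def mu_def)
  qed
  moreover have "partition mu"
    unfolding partition_def sorted_wrt_iff_nth_less
  proof (intro conjI ballI allI impI)
    fix x assume "x \<in> set mu"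
    then obtain r where "r < n" "x = q r" by (auto simp: mu_def)
    then show "0 < x" using pos by simp
  next
    fix i j assume "i < j" "j < length mu"
    then show "mu ! j \<le> mu ! i" using antimonoD[OF assms(1), of i j] by (simp add: mu_def)
  qed
  ultimately show ?thesis by (auto simp: mu_def)
qed

section \<open>James' abacus\<close>

text \<open>With L beads, row r of a row-length function p sits at position p r + (L - 1 - r); for
  L = length lam these are the first-column hook lengths of lam.\<close>

definition bead :: "nat \<Rightarrow> (nat \<Rightarrow> nat) \<Rightarrow> nat \<Rightarrow> nat" where
  "bead L p r = p r + (L - 1 - r)"

definition beads :: "nat \<Rightarrow> (nat \<Rightarrow> nat) \<Rightarrow> nat set" where
  "beads L p = bead L p ` {..<L}"

lemma finite_beads [simp]: "finite (beads L p)"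
  unfolding beads_def by simp

lemma antimono_bead: "antimono p \<Longrightarrow> antimono (bead L p)"
  unfolding bead_def by (intro antimonoI add_le_mono diff_le_mono2) (auto dest: antimonoD)

lemma bead_gap: "antimono p \<Longrightarrow> r \<le> r' \<Longrightarrow> r' < L \<Longrightarrow> bead L p r' + (r' - r) \<le> bead L p r"
  unfolding bead_def using antimonoD[of p r r'] by simp

lemma bead_less: "antimono p \<Longrightarrow> r < r' \<Longrightarrow> r' < L \<Longrightarrow> bead L p r' < bead L p r"
  using bead_gap[of p r r' L] by simp

lemma inj_on_bead: "antimono p \<Longrightarrow> inj_on (bead L p) {..<L}"
  unfolding inj_on_def by (metis bead_less lessThan_iff linorder_neqE_nat less_irrefl)

lemma card_beads: "antimono p \<Longrightarrow> card (beads L p) = L"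
  unfolding beads_def using inj_on_bead card_image by fastforce

lemma sum_beads: "antimono p \<Longrightarrow> \<Sum>(beads L p) = (\<Sum>r<L. p r) + (\<Sum>r<L. L - 1 - r)"
proof -
  assume p: "antimono p"
  have "\<Sum>(beads L p) = (\<Sum>r<L. bead L p r)"
    unfolding beads_def by (simp add: sum.reindex[OF inj_on_bead[OF p]])
  then show ?thesis by (simp only: bead_def sum.distrib)
qed

lemma beads_above_bead:
  assumes p: "antimono p" and r: "r < L"
  shows "{x \<in> beads L p. bead L p r < x} = bead L p ` {..<r}"
proof (intro set_eqI iffI)
  fix x assume "x \<in> {x \<in> beads L p. bead L p r < x}"
  then obtain r' where r': "r' < L" "x = bead L p r'" "bead L p r < bead L p r'"
    by (auto simp: beads_def)
  then have "r' < r" using bead_less[OF p, of r r' L] by (metis less_asym linorder_neqE_nat)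
  then show "x \<in> bead L p ` {..<r}" using r' by auto
qed (use bead_less[OF p _ r] r in \<open>auto simp: beads_def\<close>)

lemma beads_inj:
  assumes p: "antimono p" "\<And>r. L \<le> r \<Longrightarrow> p r = 0"
    and q: "antimono q" "\<And>r. L \<le> r \<Longrightarrow> q r = 0"
    and eq: "beads L p = beads L q"
  shows "p = q"
proof
  fix r
  show "p r = q r"
  proof (cases "r < L")
    case True
    let ?B = "beads L p"
    have rank: "card {x \<in> ?B. bead L f r < x} = r" if f: "antimono f" "beads L f = ?B" for f
    proof -
      have "card {x \<in> ?B. bead L f r < x} = card (bead L f ` {..<r})"
        using beads_above_bead[OF f(1) True] f(2) by simp
      also have "\<dots> = r"
        using True by (subst card_image[OF inj_on_subset[OF inj_on_bead[OF f(1)]]]) auto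
      finally show ?thesis .
    qed
    have mem: "bead L p r \<in> ?B" "bead L q r \<in> ?B" using True eq unfolding beads_def by auto
    have mono: "card {x \<in> ?B. b < x} < card {x \<in> ?B. a < x}" if "a < b" "a \<in> ?B" "b \<in> ?B" for a b
      using that by (intro psubset_card_mono) auto
    have "bead L p r = bead L q r"
    proof (rule ccontr)
      assume "bead L p r \<noteq> bead L q r"
      then consider "bead L p r < bead L q r" | "bead L q r < bead L p r" by linarith
      then show False
        using mono[OF _ mem] mono[OF _ mem(2,1)] rank[OF p(1) refl] rank[OF q(1) eq[symmetric]]
        by cases simp_all
    qed
    then show ?thesis by (simp add: bead_def)
  qed (simp add: p q)
qed

lemma beads_part_eq_iff:
  assumes "partition lam" "length lam \<le> L" "partition mu" "length mu \<le> L"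
  shows "beads L (part lam) = beads L (part mu) \<longleftrightarrow> lam = mu"
proof
  assume "beads L (part lam) = beads L (part mu)"
  then have "part lam = part mu"
    using assms by (intro beads_inj[where L=L]) (auto simp: antimono_part part_eq_0)
  then show "lam = mu" using assms partition_eqI by blast
qed simp

lemma ex_partition_beads:
  "finite X \<Longrightarrow> card X = L \<Longrightarrow> \<exists>lam. partition lam \<and> length lam \<le> L \<and> beads L (part lam) = X"
proof (induction L arbitrary: X)
  case 0
  then show ?case by (intro exI[of _ "[]"]) (auto simp: partition_def beads_def)
next
  case (Suc L)
  define M where "M = Max X"
  have "X \<noteq> {}" using Suc.prems by auto
  then have MX: "M \<in> X" and Mge: "\<And>x. x \<in> X \<Longrightarrow> x \<le> M"
    using Suc.prems by (auto simp: M_def)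
  obtain lam where lam: "partition lam" "length lam \<le> L" "beads L (part lam) = X - {M}"
    using Suc.IH[of "X - {M}"] Suc.prems MX by auto
  have top: "L \<le> M \<and> part lam 0 \<le> M - L"
  proof (cases L)
    case (Suc L')
    then have "bead L (part lam) 0 \<in> X - {M}" using lam(3) unfolding beads_def by auto
    then have "bead L (part lam) 0 < M" using Mge by force
    then show ?thesis using Suc by (simp add: bead_def)
  qed (use lam(2) in \<open>simp add: part_def\<close>)
  \<comment> \<open>the new bead M becomes the first row\<close>
  define q where "q r = (if r = 0 then M - L else part lam (r - 1))" for r
  have "antimono q"
    unfolding antimono_iff_le_Suc
    using top antimonoD[OF antimono_part[OF lam(1)]] by (auto simp: q_def nat.split_sels)
  moreover have "Suc L \<le> r \<Longrightarrow> q r = 0" for r using lam(2) by (auto simp: q_def part_def)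
  ultimately obtain mu where mu: "partition mu" "part mu = q" "length mu \<le> Suc L"
    using ex_partition_part by blast
  have "beads (Suc L) q = insert (bead (Suc L) q 0) (bead (Suc L) q ` Suc ` {..<L})"
    unfolding beads_def lessThan_Suc_eq_insert_0 by (simp add: image_image)
  also have "bead (Suc L) q 0 = M" using top by (simp add: bead_def q_def)
  also have "bead (Suc L) q ` Suc ` {..<L} = beads L (part lam)"
    unfolding beads_def image_image by (intro image_cong) (auto simp: bead_def q_def)
  finally have "beads (Suc L) q = X" using lam(3) MX by auto
  then show ?case using mu by auto
qed

lemma beads_add:
  assumes "\<And>r. L \<le> r \<Longrightarrow> p r = 0"
  shows "beads (L + c) p = (\<lambda>x. x + c) ` beads L p \<union> {..<c}"
proof -
  have "beads (L + c) p = bead (L + c) p ` {..<L} \<union> bead (L + c) p ` {L..<L + c}"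
    unfolding beads_def by (metis image_Un ivl_disj_un(8) le_add1)
  also have "bead (L + c) p ` {..<L} = (\<lambda>x. x + c) ` beads L p"
    unfolding beads_def image_image by (intro image_cong) (auto simp: bead_def)
  also have "bead (L + c) p ` {L..<L + c} = (\<lambda>r. L + c - 1 - r) ` {L..<L + c}"
    by (intro image_cong) (auto simp: bead_def assms)
  also have "\<dots> = {..<c}"
  proof (intro set_eqI iffI)
    fix x assume "x \<in> {..<c}"
    then show "x \<in> (\<lambda>r. L + c - 1 - r) ` {L..<L + c}"
      by (intro image_eqI[of _ _ "L + c - 1 - x"]) auto
  qed auto
  finally show ?thesis .
qed

section \<open>Hooks and cores on the abacus\<close>

definition bead_closed :: "nat \<Rightarrow> nat set \<Rightarrow> bool" where
  "bead_closed t X \<longleftrightarrow> (\<forall>x\<in>X. t \<le> x \<longrightarrow> x - t \<in> X)"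

text \<open>The hook of cell (i, j) runs from the bead of row i down to the empty position
  L + j - conj_part lam j, the gap between rows of length > j and rows of length \<le> j.\<close>

lemma hook_bead_gap:
  assumes lam: "partition lam" "length lam \<le> L" and ij: "(i, j) \<in> diagram lam"
  defines "x \<equiv> bead L (part lam) i"
  shows "x \<in> beads L (part lam) \<and> hook_len lam i j \<le> x \<and> x - hook_len lam i j \<notin> beads L (part lam)"
proof -
  let ?p = "part lam"
  define c where "c = conj_part lam j"
  have col: "j < ?p r \<longleftrightarrow> r < c" for r
    using less_part_iff_less_conj_part[OF lam(1)] c_def by blast
  have jp: "j < ?p i" using ij by (simp add: diagram_part)
  have ic: "i < c" using col jp by blast
  have cL: "c \<le> L" using conj_part_le_length[of lam j] lam(2) c_def by simp
  have h: "hook_len lam i j = ?p i - j + c - i - 1" using hook_len_part[OF lam(1) ij] c_def by simp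
  have "x \<in> beads L ?p" using ic cL by (simp add: beads_def x_def)
  moreover have "hook_len lam i j \<le> x" "x - hook_len lam i j = L + j - c"
    using h jp ic cL by (simp_all add: x_def bead_def)
  moreover have "L + j - c \<notin> beads L ?p"
  proof
    assume "L + j - c \<in> beads L ?p"
    then obtain r where r: "r < L" "bead L ?p r = L + j - c" by (auto simp: beads_def)
    then show False using col[of r] cL by (cases "r < c") (simp_all add: bead_def)
  qed
  ultimately show ?thesis by simp
qed

text \<open>Conversely, a bead x with an empty position y = x - t below it: if k beads lie above y,
  then column j = y + k - L has length exactly k.\<close>

lemma gap_below_bead:
  assumes lam: "partition lam" "length lam \<le> L" and t: "0 < t"
    and xB: "x \<in> beads L (part lam)" and tx: "t \<le> x" and yB: "x - t \<notin> beads L (part lam)"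
  obtains i k where "i < k" "k \<le> L" "x = bead L (part lam) i" "L \<le> x - t + k"
    "\<And>r. x - t + k - L < part lam r \<longleftrightarrow> r < k"
proof -
  let ?p = "part lam"
  let ?b = "bead L ?p"
  have ap: "antimono ?p" using antimono_part[OF lam(1)] .
  obtain i where i: "i < L" "x = ?b i" using xB by (auto simp: beads_def)
  define y where "y = x - t"
  define k where "k = card {r. y < ?b r}"
  have bL: "L \<le> r \<Longrightarrow> ?b r = 0" for r using lam(2) by (simp add: bead_def part_def)
  have "{r. y < ?b r} = {..<k}" unfolding k_def
    by (rule antimono_Collect_less_eq_lessThan[where N=L]) (simp_all add: antimono_bead[OF ap] bL)
  then have above: "r < k \<longleftrightarrow> y < ?b r" for r by blast
  have ik: "i < k" using above i t tx y_def by simp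
  have kL: "k \<le> L" using above[of L] bL by (cases "k \<le> L") simp_all
  have notin: "r < L \<Longrightarrow> ?b r \<noteq> y" for r
    using yB y_def unfolding beads_def by (metis image_eqI lessThan_iff)
  have below: "k < L \<Longrightarrow> ?b k < y" using above[of k] notin[of k] by simp
  have ykL: "L \<le> y + k"
    using below kL by (cases "k < L") (simp_all add: bead_def)
  define j where "j = y + k - L"
  have pk: "?p k \<le> j"
    using below ykL lam(2) kL by (cases "k < L") (simp_all add: bead_def j_def part_def)
  have "j < ?p r \<longleftrightarrow> r < k" for r
  proof
    assume "j < ?p r"
    then show "r < k" using pk antimonoD[OF ap, of k r] by (cases "r < k") simp_all
  next
    assume rk: "r < k"
    have "?b (k - 1) + (k - 1 - r) \<le> ?b r" using bead_gap[OF ap, of r "k - 1" L] rk kL by simp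
    moreover have "y < ?b (k - 1)" using above[of "k - 1"] rk by simp
    ultimately show "j < ?p r" using rk kL ykL by (simp add: bead_def j_def)
  qed
  then show ?thesis using that[OF ik kL i(2)] ykL unfolding j_def y_def by blast
qed

lemma bead_gap_hook:
  assumes lam: "partition lam" "length lam \<le> L" and t: "0 < t"
    and xB: "x \<in> beads L (part lam)" and tx: "t \<le> x" and yB: "x - t \<notin> beads L (part lam)"
  shows "\<exists>(i, j)\<in>diagram lam. hook_len lam i j = t"
proof -
  obtain i k where ik: "i < k" "k \<le> L" and xi: "x = bead L (part lam) i" and ykL: "L \<le> x - t + k"
    and col: "\<And>r. x - t + k - L < part lam r \<longleftrightarrow> r < k"
    using gap_below_bead[OF assms] by blast
  define j where "j = x - t + k - L"
  have "conj_part lam j = k"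
    using col unfolding conj_part_eq_card j_def by (simp add: lessThan_def)
  moreover have ij: "(i, j) \<in> diagram lam" using col ik by (simp add: diagram_part j_def)
  ultimately have "hook_len lam i j = part lam i - j + k - i - 1"
    using hook_len_part[OF lam(1)] by simp
  also have "\<dots> = t" using col[of i] ik ykL tx xi by (simp add: bead_def j_def)
  finally show ?thesis using ij by blast
qed

lemma is_core_iff_bead_closed:
  assumes "partition lam" "length lam \<le> L" "0 < t"
  shows "is_core t lam \<longleftrightarrow> bead_closed t (beads L (part lam))"
  using hook_bead_gap[OF assms(1,2)] bead_gap_hook[OF assms] assms(1)
  unfolding is_core_def bead_closed_def by fastforce

section \<open>Rim hooks as bead moves\<close>

abbreviation cell_path :: "(nat \<times> nat) set \<Rightarrow> nat \<times> nat \<Rightarrow> nat \<times> nat \<Rightarrow> bool" where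
  "cell_path S \<equiv> (\<lambda>x y. x \<in> S \<and> y \<in> S \<and> cell_adj x y)\<^sup>*\<^sup>*"

lemma cell_path_sym: "cell_path S a b \<Longrightarrow> cell_path S b a"
proof -
  have "symp (\<lambda>x y. x \<in> S \<and> y \<in> S \<and> cell_adj x y)"
    by (rule sympI) (auto simp: cell_adj_def)
  then show "cell_path S a b \<Longrightarrow> cell_path S b a" by (meson sympD symp_rtranclp)
qed

lemma cell_path_row:
  assumes "\<And>c. a \<le> c \<Longrightarrow> c < b \<Longrightarrow> (r, c) \<in> S" "a \<le> c" "c < b"
  shows "cell_path S (r, c) (r, b - 1)"
proof -
  have "cell_path S (r, c) (r, c + n)" if "c + n < b" for n
    using that
  proof (induction n)
    case (Suc n)
    then have "cell_adj (r, c + n) (r, c + Suc n)" "(r, c + n) \<in> S" "(r, c + Suc n) \<in> S"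
      using assms by (auto simp: cell_adj_def)
    then show ?case using Suc by (simp add: rtranclp.rtrancl_into_rtrancl)
  qed simp
  from this[of "b - 1 - c"] show ?thesis using assms by simp
qed

lemma cell_path_crosses_row:
  assumes "cell_path S a b" "fst a \<le> r" "r < fst b"
  shows "\<exists>c. (r, c) \<in> S \<and> (Suc r, c) \<in> S"
proof (rule ccontr)
  assume nob: "\<not> (\<exists>c. (r, c) \<in> S \<and> (Suc r, c) \<in> S)"
  have "fst b \<le> r" using assms(1,2)
  proof (induction rule: rtranclp_induct)
    case (step y z)
    show ?case
    proof (rule ccontr)
      assume "\<not> fst z \<le> r"
      then have "fst z = Suc (fst y) \<and> snd z = snd y \<and> fst y = r"
        using step unfolding cell_adj_def by auto
      then show False using nob step(2) by (metis prod.collapse)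
    qed
  qed
  then show False using assms(3) by simp
qed

text \<open>The skew shape {(r, c). q r \<le> c \<and> c < p r} is a border strip occupying rows i to
  k - 1; q r = p (r + 1) - 1 says that consecutive rows overlap in exactly one column.\<close>

definition rim_strip :: "(nat \<Rightarrow> nat) \<Rightarrow> (nat \<Rightarrow> nat) \<Rightarrow> nat \<Rightarrow> nat \<Rightarrow> bool" where
  "rim_strip p q i k \<longleftrightarrow> i < k \<and> (\<forall>r. r < i \<or> k \<le> r \<longrightarrow> q r = p r) \<and> q (k - 1) < p (k - 1) \<and>
     (\<forall>r. i \<le> r \<and> r < k - 1 \<longrightarrow> 0 < p (Suc r) \<and> q r = p (Suc r) - 1)"

lemma rim_strip_rows:
  assumes p: "antimono p" and strip: "rim_strip p q i k"
  shows "q r \<le> p r" "q r < p r \<longleftrightarrow> i \<le> r \<and> r < k"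
proof -
  have pS: "p (Suc r) \<le> p r" using antimonoD[OF p] by simp
  consider "r < i \<or> k \<le> r" | "i \<le> r" "r < k - 1" | "r = k - 1" "i \<le> r"
    using strip unfolding rim_strip_def by linarith
  then have "q r \<le> p r \<and> (q r < p r \<longleftrightarrow> i \<le> r \<and> r < k)"
  proof cases
    case 1
    then show ?thesis using strip unfolding rim_strip_def by auto
  next
    case 2
    then have "0 < p (Suc r)" "q r = p (Suc r) - 1" using strip unfolding rim_strip_def by auto
    then show ?thesis using 2 pS by auto
  next
    case 3
    then show ?thesis using strip unfolding rim_strip_def by auto
  qed
  then show "q r \<le> p r" "q r < p r \<longleftrightarrow> i \<le> r \<and> r < k" by auto
qed

lemma rim_strip_no_2x2:
  assumes p: "antimono p" and strip: "rim_strip p q i k"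
  shows "no_2x2 {(r, c). q r \<le> c \<and> c < p r}"
  unfolding no_2x2_def
proof (intro notI, elim exE conjE)
  fix r c assume "(r, c) \<in> {(r, c). q r \<le> c \<and> c < p r}" "(Suc r, c) \<in> {(r, c). q r \<le> c \<and> c < p r}"
    "(r, Suc c) \<in> {(r, c). q r \<le> c \<and> c < p r}" "(Suc r, Suc c) \<in> {(r, c). q r \<le> c \<and> c < p r}"
  then have "q r \<le> c" "c < p r" "q (Suc r) \<le> c" "Suc c < p (Suc r)" by auto
  then have "i \<le> r" "Suc r < k"
    using rim_strip_rows(2)[OF assms] by (meson le_less_trans Suc_lessD)+
  then have "q r = p (Suc r) - 1" using strip unfolding rim_strip_def by simp
  then show False using \<open>q r \<le> c\<close> \<open>Suc c < p (Suc r)\<close> by simp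
qed

lemma rim_strip_connected:
  assumes p: "antimono p" and strip: "rim_strip p q i k"
  defines "S \<equiv> {(r, c). q r \<le> c \<and> c < p r}"
  shows "cells_connected S"
proof -
  have row: "(r, c) \<in> S \<longleftrightarrow> q r \<le> c \<and> c < p r" for r c by (simp add: S_def)
  have rows: "q r < p r \<longleftrightarrow> i \<le> r \<and> r < k" for r using rim_strip_rows(2)[OF assms(1,2)] .
  define e where "e r = (r, p r - 1)" for r
  have to_end: "cell_path S (r, c) (e r)" if "(r, c) \<in> S" for r c
    using that row cell_path_row[of "q r" "p r" r S c] by (simp add: e_def)
  have step: "cell_path S (e r) (e (Suc r))" if "i \<le> r" "Suc r < k" for r
  proof -
    have q: "q r = p (Suc r) - 1" "0 < p (Suc r)" using strip that unfolding rim_strip_def by auto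
    have "q r < p r" "q (Suc r) < p (Suc r)" using rows that by auto
    then have "(r, q r) \<in> S" "e (Suc r) \<in> S" "cell_adj (r, q r) (e (Suc r))"
      using q by (auto simp: row e_def cell_adj_def)
    moreover have "cell_path S (e r) (r, q r)" using to_end \<open>(r, q r) \<in> S\<close> cell_path_sym by blast
    ultimately show ?thesis by (simp add: rtranclp.rtrancl_into_rtrancl)
  qed
  have to_last: "cell_path S (e r) (e (k - 1))" if "i \<le> r" "r < k" for r
    using that
  proof (induction "k - 1 - r" arbitrary: r)
    case (Suc n)
    then have "n = k - 1 - Suc r" "i \<le> Suc r" "Suc r < k" by auto
    then have "cell_path S (e (Suc r)) (e (k - 1))" using Suc.hyps(1) by blast
    then show ?case using step[OF Suc.prems(1) \<open>Suc r < k\<close>] by (rule rtranclp_trans[rotated])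
  next
    case 0
    then have "r = k - 1" by simp
    then show ?case by simp
  qed
  have hub: "cell_path S a (e (k - 1))" if "a \<in> S" for a
  proof -
    obtain r c where a: "a = (r, c)" by fastforce
    then have "q r < p r" using that row by auto
    then have "cell_path S (e r) (e (k - 1))" using rows to_last by blast
    moreover have "cell_path S (r, c) (e r)" using a that to_end by simp
    ultimately show ?thesis unfolding a by (rule rtranclp_trans[rotated])
  qed
  then show ?thesis
    unfolding cells_connected_def using rtranclp_trans[OF hub cell_path_sym[OF hub]] by blast
qed

lemma no_2x2_rows_overlap:
  assumes p: "antimono p" and q: "antimono q" and S: "S = {(r, c). q r \<le> c \<and> c < p r}" "no_2x2 S"
    and c: "(r, c) \<in> S" "(Suc r, c) \<in> S"
  shows "0 < p (Suc r) \<and> q r = p (Suc r) - 1"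
proof -
  have "\<not> q r + 2 \<le> p (Suc r)"
  proof
    assume "q r + 2 \<le> p (Suc r)"
    moreover have "p (Suc r) \<le> p r" "q (Suc r) \<le> q r" using p q by (simp_all add: antimonoD)
    ultimately have "(r, p (Suc r) - 2) \<in> S" "(Suc r, p (Suc r) - 2) \<in> S"
      "(r, Suc (p (Suc r) - 2)) \<in> S" "(Suc r, Suc (p (Suc r) - 2)) \<in> S"
      by (auto simp: S(1))
    then show False using S(2) unfolding no_2x2_def by blast
  qed
  then show ?thesis using c by (auto simp: S(1))
qed

lemma rim_hook_rim_strip:
  assumes p: "antimono p" "\<And>r. L \<le> r \<Longrightarrow> p r = 0" and q: "antimono q" "\<And>r. q r \<le> p r"
    and S: "S = {(r, c). q r \<le> c \<and> c < p r}" "S \<noteq> {}" "cells_connected S" "no_2x2 S"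
  obtains i k where "k \<le> L" "rim_strip p q i k"
proof -
  have row: "(r, c) \<in> S \<longleftrightarrow> q r \<le> c \<and> c < p r" for r c by (simp add: S(1))
  define R where "R = {r. q r < p r}"
  have RL: "R \<subseteq> {..<L}" using p(2) by (force simp: R_def not_less[symmetric])
  then have finR: "finite R" by (rule finite_subset) simp
  obtain r c where "(r, c) \<in> S" using S(2) by auto
  then have "r \<in> R" by (simp add: R_def row)
  then have "R \<noteq> {}" by blast
  define i where "i = Min R"
  define k where "k = Suc (Max R)"
  have iR: "i \<in> R" and kR: "k - 1 \<in> R" and ik: "i < k"
    using finR \<open>R \<noteq> {}\<close> by (simp_all add: i_def k_def le_imp_less_Suc)
  have kL: "k \<le> L" using kR RL ik by auto
  have outside: "q r = p r" if "r < i \<or> k \<le> r" for r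
  proof -
    have "r \<notin> R" using that finR i_def k_def by (auto dest: Min_le Max_ge)
    then show ?thesis using q(2)[of r] by (simp add: R_def)
  qed
  have inside: "0 < p (Suc r) \<and> q r = p (Suc r) - 1" if r: "i \<le> r" "r < k - 1" for r
  proof -
    have "(i, q i) \<in> S" "(k - 1, q (k - 1)) \<in> S" using iR kR by (simp_all add: row R_def)
    then obtain c where "(r, c) \<in> S" "(Suc r, c) \<in> S"
      using cell_path_crosses_row[of S "(i, q i)" "(k - 1, q (k - 1))" r] S(3) r
      unfolding cells_connected_def by auto
    then show ?thesis using no_2x2_rows_overlap[OF p(1) q(1) S(1,4)] by blast
  qed
  have "rim_strip p q i k"
    unfolding rim_strip_def using ik outside inside kR by (auto simp: R_def)
  then show ?thesis using that kL by blast
qed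

lemma antimono_rim_strip:
  assumes p: "antimono p" and strip: "rim_strip p q i k" and last: "p k \<le> q (k - 1)"
  shows "antimono q"
  unfolding antimono_iff_le_Suc
proof
  fix r
  have pS: "p (Suc r) \<le> p r" using antimonoD[OF p] by simp
  note rows = rim_strip_rows[OF p strip]
  consider "r < i \<or> k \<le> r" | "i \<le> r" "r < k - 1" | "r = k - 1"
    using strip unfolding rim_strip_def by linarith
  then show "q (Suc r) \<le> q r"
  proof cases
    case 2
    then have "q (Suc r) < p (Suc r)" "q r = p (Suc r) - 1"
      using rows(2)[of "Suc r"] strip unfolding rim_strip_def by auto
    then show ?thesis by simp
  next
    case 3
    then show ?thesis using strip last unfolding rim_strip_def by auto
  qed (use strip pS rows(1)[of "Suc r"] in \<open>auto simp: rim_strip_def\<close>)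
qed

lemma bead_rim_strip_notin:
  assumes p: "antimono p" and q: "antimono q" and strip: "rim_strip p q i k"
  shows "bead L q (k - 1) \<notin> beads L p"
proof
  assume "bead L q (k - 1) \<in> beads L p"
  then obtain r where r: "r < L" "bead L q (k - 1) = bead L p r" by (auto simp: beads_def)
  show False
  proof (cases "r < k")
    case True
    then have "bead L p (k - 1) \<le> bead L p r" using antimonoD[OF antimono_bead[OF p]] by simp
    then show False using r strip by (simp add: bead_def rim_strip_def)
  next
    case False
    then have "bead L p r \<le> bead L p k" using antimonoD[OF antimono_bead[OF p]] by simp
    moreover have "p k \<le> q (k - 1)"
      using strip antimonoD[OF q, of "k - 1" k] by (simp add: rim_strip_def)
    ultimately show False using r False strip by (simp add: bead_def rim_strip_def)
  qed
qed

lemma beads_rim_strip: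
  assumes p: "antimono p" and strip: "rim_strip p q i k" and kL: "k \<le> L"
  shows "beads L q = insert (bead L q (k - 1)) (beads L p - {bead L p i})"
proof -
  have ik: "i < k" and outside: "\<And>r. r < i \<or> k \<le> r \<Longrightarrow> q r = p r"
    and inside: "\<And>r. i \<le> r \<Longrightarrow> r < k - 1 \<Longrightarrow> 0 < p (Suc r) \<and> q r = p (Suc r) - 1"
    using strip unfolding rim_strip_def by auto
  have rows: "{..<L} - {i} = {..<i} \<union> Suc ` {i..<k - 1} \<union> {k..<L}"
  proof (intro set_eqI iffI)
    fix x assume "x \<in> {..<L} - {i}"
    then show "x \<in> {..<i} \<union> Suc ` {i..<k - 1} \<union> {k..<L}"
      using ik by (cases x) (auto simp: image_iff)
  qed (use ik kL in auto)
  have shifted: "bead L q ` {i..<k - 1} = bead L p ` Suc ` {i..<k - 1}"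
    unfolding image_image
  proof (intro image_cong refl)
    fix r assume "r \<in> {i..<k - 1}"
    then show "bead L q r = bead L p (Suc r)" using inside[of r] kL by (auto simp: bead_def)
  qed
  have "beads L p - {bead L p i} = bead L p ` ({..<L} - {i})"
    unfolding beads_def using ik kL by (subst inj_on_image_set_diff[OF inj_on_bead[OF p]]) auto
  also have "\<dots> = bead L q ` {..<i} \<union> bead L q ` {i..<k - 1} \<union> bead L q ` {k..<L}"
    unfolding rows image_Un shifted by (auto simp: bead_def outside)
  finally have "beads L p - {bead L p i} = \<dots>" .
  moreover have "{..<L} = {..<i} \<union> {i..<k - 1} \<union> {k - 1} \<union> {k..<L}" using ik kL by auto
  then have "beads L q = insert (bead L q (k - 1))
      (bead L q ` {..<i} \<union> bead L q ` {i..<k - 1} \<union> bead L q ` {k..<L})"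
    unfolding beads_def by auto
  ultimately show ?thesis by simp
qed

text \<open>The sum of the beads is the size of the partition plus a constant, so moving a bead
  from x to y removes x - y cells.\<close>

lemma card_diagram_diff_beads:
  assumes lam: "partition lam" "length lam \<le> L" and mu: "partition mu" "length mu \<le> L"
    and sub: "diagram mu \<subseteq> diagram lam"
    and x: "x \<in> beads L (part lam)" and y: "y \<notin> beads L (part lam)"
    and eq: "beads L (part mu) = insert y (beads L (part lam) - {x})"
  shows "card (diagram lam - diagram mu) + y = x"
proof -
  have fin: "finite (diagram lam)" by simp
  have sums: "\<Sum>(beads L (part nu)) = card (diagram nu) + (\<Sum>r<L. L - 1 - r)"
    if "partition nu" "length nu \<le> L" for nu
    using sum_beads[OF antimono_part[OF that(1)]] card_diagram[OF that(2)] by simp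
  have "\<Sum>(beads L (part mu)) + x = \<Sum>(beads L (part lam)) + y"
    using x y unfolding eq by (simp add: sum.remove)
  moreover have "card (diagram mu) \<le> card (diagram lam)" using sub fin by (rule card_mono[rotated])
  ultimately show ?thesis
    using sums[OF lam] sums[OF mu] card_Diff_subset[OF finite_subset[OF sub fin] sub] by simp
qed

lemma removes_rim_hook_moves_bead:
  assumes lam: "partition lam" "length lam \<le> L" and hook: "removes_rim_hook t lam mu"
  shows "partition mu \<and> length mu \<le> L \<and>
    (\<exists>x\<in>beads L (part lam). t \<le> x \<and> x - t \<notin> beads L (part lam) \<and>
        beads L (part mu) = insert (x - t) (beads L (part lam) - {x}))"
proof -
  let ?p = "part lam" and ?q = "part mu"
  define S where "S = diagram lam - diagram mu"
  have mu: "partition mu" and sub: "diagram mu \<subseteq> diagram lam" and S: "S \<noteq> {}"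
    "card S = t" "cells_connected S" "no_2x2 S"
    using hook unfolding removes_rim_hook_def Let_def S_def by auto
  have p0: "L \<le> r \<Longrightarrow> ?p r = 0" for r using lam(2) by (simp add: part_eq_0)
  have qp: "?q r \<le> ?p r" for r
  proof (rule ccontr)
    assume "\<not> ?q r \<le> ?p r"
    then have "(r, ?p r) \<in> diagram mu" by (simp add: diagram_part)
    then show False using sub by (auto simp: diagram_part)
  qed
  have Sq: "S = {(r, c). ?q r \<le> c \<and> c < ?p r}" unfolding S_def diagram_part by auto
  have lmu: "length mu \<le> L" using part_pos_iff[OF mu, of L] qp[of L] p0 by simp
  obtain i k where kL: "k \<le> L" and strip: "rim_strip ?p ?q i k"
    using rim_hook_rim_strip[OF antimono_part[OF lam(1)] p0 antimono_part[OF mu] qp Sq S(1,3,4)]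
    by blast
  define x y where "x = bead L ?p i" and "y = bead L ?q (k - 1)"
  have x: "x \<in> beads L ?p" using strip kL by (auto simp: beads_def rim_strip_def x_def)
  have y: "y \<notin> beads L ?p" unfolding y_def
    by (rule bead_rim_strip_notin[OF antimono_part[OF lam(1)] antimono_part[OF mu] strip])
  have move: "beads L ?q = insert y (beads L ?p - {x})"
    unfolding x_def y_def by (rule beads_rim_strip[OF antimono_part[OF lam(1)] strip kL])
  have "card S + y = x"
    unfolding S_def by (rule card_diagram_diff_beads[OF lam mu lmu sub x y move])
  then have "t \<le> x" "x - t = y" using S(2) by auto
  then show ?thesis using mu lmu x y move by auto
qed

text \<open>Given a column j of length k, the rim strip from row i down to row k - 1 that ends
  in column j: each row is cut back to one less than the length of the next row.\<close>

lemma ex_rim_strip: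
  assumes p: "antimono p" and ik: "i < k" and col: "\<And>r. j < p r \<longleftrightarrow> r < k"
  obtains q where "rim_strip p q i k" "antimono q" "q (k - 1) = j"
proof -
  define q where
    "q r = (if r < i \<or> k \<le> r then p r else if r < k - 1 then p (Suc r) - 1 else j)" for r
  have q_last: "q (k - 1) = j" using ik unfolding q_def by auto
  have strip: "rim_strip p q i k"
    unfolding rim_strip_def
  proof (intro conjI allI impI)
    show "q (k - 1) < p (k - 1)" unfolding q_last using col[of "k - 1"] ik by simp
    fix r
    show "r < i \<or> k \<le> r \<Longrightarrow> q r = p r" by (simp add: q_def)
    assume "i \<le> r \<and> r < k - 1"
    then show "0 < p (Suc r)" "q r = p (Suc r) - 1"
      using col[of "Suc r"] by (auto simp: q_def)
  qed (fact ik)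
  moreover have "antimono q"
    using antimono_rim_strip[OF p strip] col[of k] unfolding q_last by simp
  ultimately show ?thesis using that q_last by blast
qed

lemma ex_removes_rim_hook_moving_bead:
  assumes lam: "partition lam" "length lam \<le> L" and t: "0 < t"
    and xB: "x \<in> beads L (part lam)" and tx: "t \<le> x" and yB: "x - t \<notin> beads L (part lam)"
  shows "\<exists>mu. removes_rim_hook t lam mu \<and> length mu \<le> L \<and>
              beads L (part mu) = insert (x - t) (beads L (part lam) - {x})"
proof -
  let ?p = "part lam"
  have p: "antimono ?p" using antimono_part[OF lam(1)] .
  obtain i k where ik: "i < k" "k \<le> L" and xi: "x = bead L ?p i" and ykL: "L \<le> x - t + k"
    and col: "\<And>r. x - t + k - L < ?p r \<longleftrightarrow> r < k"
    using gap_below_bead[OF assms] by blast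
  obtain q where strip: "rim_strip ?p q i k" and q: "antimono q"
    and q_last: "q (k - 1) = x - t + k - L"
    using ex_rim_strip[OF p ik(1) col] by blast
  have "L \<le> r \<Longrightarrow> q r = 0" for r
    using strip ik lam(2) by (simp add: rim_strip_def part_eq_0)
  then obtain mu where mu: "partition mu" "part mu = q" "length mu \<le> L"
    using ex_partition_part[OF q] by blast
  have sub: "diagram mu \<subseteq> diagram lam"
    unfolding diagram_part mu(2) using rim_strip_rows(1)[OF p strip] by (auto intro: less_le_trans)
  have beads: "beads L (part mu) = insert (x - t) (beads L ?p - {x})"
    using beads_rim_strip[OF p strip ik(2)] q_last ik ykL xi by (simp add: mu(2) bead_def)
  define S where "S = diagram lam - diagram mu"
  have S: "S = {(r, c). q r \<le> c \<and> c < ?p r}"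
    unfolding S_def diagram_part mu(2) by auto
  have "card S = t"
    using card_diagram_diff_beads[OF lam mu(1,3) sub xB yB beads] tx unfolding S_def by simp
  moreover have "S \<noteq> {}" using rim_strip_rows(2)[OF p strip, of i] ik unfolding S by auto
  ultimately have "removes_rim_hook t lam mu"
    unfolding removes_rim_hook_def Let_def S_def[symmetric]
    using mu(1) sub rim_strip_connected[OF p strip] rim_strip_no_2x2[OF p strip] S by simp
  then show ?thesis using mu(3) beads by blast
qed

section \<open>The t-core on the abacus\<close>

definition runner_size :: "nat \<Rightarrow> nat set \<Rightarrow> nat \<Rightarrow> nat" where
  "runner_size t X r = card {y \<in> X. y mod t = r}"

text \<open>Slides every bead along its runner (residue class modulo t) towards position 0 as far
  as possible.\<close>

definition push_up :: "nat \<Rightarrow> nat set \<Rightarrow> nat set" where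
  "push_up t X = {x. x div t < runner_size t X (x mod t)}"

lemma mod_eq_imp_eq_add_mult: "y mod t = r \<Longrightarrow> y = r + t * (y div t)"
  for y t r :: nat by (metis add.commute div_mult_mod_eq mult.commute)

lemma push_up_runner:
  assumes "0 < t" "r < t"
  shows "{y \<in> push_up t X. y mod t = r} = (\<lambda>q. r + t * q) ` {..<runner_size t X r}"
proof (intro set_eqI iffI)
  fix y assume "y \<in> {y \<in> push_up t X. y mod t = r}"
  then show "y \<in> (\<lambda>q. r + t * q) ` {..<runner_size t X r}"
    by (intro image_eqI[of _ _ "y div t"]) (auto simp: push_up_def intro: mod_eq_imp_eq_add_mult)
qed (use assms in \<open>auto simp: push_up_def\<close>)

lemma runner_size_push_up:
  assumes "0 < t" "r < t"
  shows "runner_size t (push_up t X) r = runner_size t X r"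
proof -
  have "inj_on (\<lambda>q. r + t * q) {..<runner_size t X r}" using assms by (auto simp: inj_on_def)
  then show ?thesis
    unfolding runner_size_def[of t "push_up t X"] push_up_runner[OF assms] by (simp add: card_image)
qed

lemma push_up_eq_UN: "0 < t \<Longrightarrow> push_up t X = (\<Union>r<t. (\<lambda>q. r + t * q) ` {..<runner_size t X r})"
  by (auto simp flip: push_up_runner)

lemma finite_push_up: "0 < t \<Longrightarrow> finite (push_up t X)"
  by (simp add: push_up_eq_UN)

lemma card_eq_sum_runner_size:
  assumes "0 < t" "finite X"
  shows "card X = (\<Sum>r<t. runner_size t X r)"
proof -
  have "X = (\<Union>r<t. {y \<in> X. y mod t = r})" using assms(1) by auto
  then have "card X = card (\<Union>r<t. {y \<in> X. y mod t = r})" by simp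
  also have "\<dots> = (\<Sum>r<t. runner_size t X r)"
    unfolding runner_size_def by (rule card_UN_disjoint) (use assms(2) in auto)
  finally show ?thesis .
qed

lemma card_push_up: "0 < t \<Longrightarrow> finite X \<Longrightarrow> card (push_up t X) = card X"
  using card_eq_sum_runner_size[of t X] card_eq_sum_runner_size[of t "push_up t X"]
    finite_push_up runner_size_push_up by simp

lemma push_up_bead_closed:
  assumes t: "0 < t" and fin: "finite X" and closed: "bead_closed t X"
  shows "push_up t X = X"
proof (intro set_eqI)
  fix x
  define r where "r = x mod t"
  define Q where "Q = {q. r + t * q \<in> X}"
  have inj: "inj_on (\<lambda>q. r + t * q) Q" using t by (auto simp: inj_on_def)
  have runner: "(\<lambda>q. r + t * q) ` Q = {y \<in> X. y mod t = r}"
  proof (intro set_eqI iffI)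
    fix y assume "y \<in> {y \<in> X. y mod t = r}"
    then show "y \<in> (\<lambda>q. r + t * q) ` Q" unfolding Q_def
      by (intro image_eqI[of _ _ "y div t"]) (auto dest: mod_eq_imp_eq_add_mult)
  qed (use t in \<open>auto simp: Q_def r_def\<close>)
  have "finite Q" using runner fin finite_image_iff[OF inj] by simp
  moreover have "q' \<in> Q" if "q \<in> Q" "q' \<le> q" for q q'
    using that
  proof (induction "q - q'" arbitrary: q)
    case (Suc n)
    then obtain p where p: "q = Suc p" by (cases q) auto
    then have "r + t * p = r + t * q - t" by simp
    moreover have "r + t * q \<in> X" "t \<le> r + t * q" using Suc.prems p by (auto simp: Q_def)
    moreover have "r + t * q - t \<in> X"
      using closed \<open>r + t * q \<in> X\<close> \<open>t \<le> r + t * q\<close> unfolding bead_closed_def by blast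
    ultimately have "p \<in> Q" by (simp add: Q_def)
    moreover have "n = p - q'" "q' \<le> p" using Suc.hyps(2) p by arith+
    ultimately show ?case using Suc.hyps(1) by blast
  qed simp
  ultimately have "Q = {..<card Q}" by (rule down_closed_eq_lessThan)
  moreover have "runner_size t X r = card Q"
    using runner inj unfolding runner_size_def by (metis card_image)
  moreover have "x = r + t * (x div t)" by (simp add: r_def)
  ultimately have "x \<in> push_up t X \<longleftrightarrow> x div t \<in> Q"
    unfolding push_up_def r_def by (metis lessThan_iff mem_Collect_eq)
  also have "\<dots> \<longleftrightarrow> x \<in> X" unfolding Q_def r_def by simp
  finally show "x \<in> push_up t X \<longleftrightarrow> x \<in> X" .
qed

lemma push_up_move_bead:
  assumes t: "0 < t" and fin: "finite X" and x: "x \<in> X" "t \<le> x" "x - t \<notin> X"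
  shows "push_up t (insert (x - t) (X - {x})) = push_up t X"
proof -
  let ?Y = "insert (x - t) (X - {x})"
  have m: "(x - t) mod t = x mod t" using x(2) by (simp add: le_mod_geq)
  have "runner_size t ?Y r = runner_size t X r" for r
  proof (cases "x mod t = r")
    case True
    then have "{y \<in> ?Y. y mod t = r} = insert (x - t) ({y \<in> X. y mod t = r} - {x})" using m by auto
    then have "card {y \<in> ?Y. y mod t = r} = Suc (card ({y \<in> X. y mod t = r} - {x}))"
      using fin x by simp
    also have "\<dots> = card {y \<in> X. y mod t = r}"
      using fin x True by (intro card_Suc_Diff1) auto
    finally show ?thesis by (simp add: runner_size_def)
  next
    case False
    then have "{y \<in> ?Y. y mod t = r} = {y \<in> X. y mod t = r}" using m by auto
    then show ?thesis by (simp add: runner_size_def)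
  qed
  then show ?thesis by (simp add: push_up_def)
qed

lemma rim_hook_chain_push_up:
  assumes t: "0 < t" and lam: "partition lam" "length lam \<le> L"
    and chain: "(removes_rim_hook t)\<^sup>*\<^sup>* lam mu"
  shows "partition mu \<and> length mu \<le> L \<and>
    push_up t (beads L (part mu)) = push_up t (beads L (part lam))"
  using chain
proof (induction rule: rtranclp_induct)
  case (step nu mu)
  then have nu: "partition nu" "length nu \<le> L" by auto
  obtain x where x: "x \<in> beads L (part nu)" "t \<le> x" "x - t \<notin> beads L (part nu)"
    and mu: "partition mu" "length mu \<le> L"
      "beads L (part mu) = insert (x - t) (beads L (part nu) - {x})"
    using removes_rim_hook_moves_bead[OF nu step(2)] by blast
  have "push_up t (beads L (part mu)) = push_up t (beads L (part nu))"
    using mu(3) push_up_move_bead[OF t finite_beads x] by simp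
  then show ?case using step mu by simp
qed (use lam in simp)

text \<open>Each rim hook removal lowers the bead sum by t, so the removals terminate.\<close>

lemma ex_rim_hook_chain_core:
  assumes t: "0 < t"
  shows "partition lam \<Longrightarrow> length lam \<le> L \<Longrightarrow> \<exists>mu. (removes_rim_hook t)\<^sup>*\<^sup>* lam mu \<and> is_core t mu"
proof (induction "\<Sum>(beads L (part lam))" arbitrary: lam rule: less_induct)
  case less
  show ?case
  proof (cases "is_core t lam")
    case False
    then obtain x where x: "x \<in> beads L (part lam)" "t \<le> x" "x - t \<notin> beads L (part lam)"
      using is_core_iff_bead_closed[OF less.prems t] unfolding bead_closed_def by blast
    obtain mu where mu: "removes_rim_hook t lam mu" "length mu \<le> L"
      "beads L (part mu) = insert (x - t) (beads L (part lam) - {x})"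
      using ex_removes_rim_hook_moving_bead[OF less.prems t x] by blast
    have "\<Sum>(beads L (part mu)) + x = \<Sum>(beads L (part lam)) + (x - t)"
      using x unfolding mu(3) by (simp add: sum.remove)
    then have "\<Sum>(beads L (part mu)) < \<Sum>(beads L (part lam))" using t x(2) by linarith
    moreover have "partition mu" using mu(1) unfolding removes_rim_hook_def by simp
    ultimately obtain nu where "(removes_rim_hook t)\<^sup>*\<^sup>* mu nu" "is_core t nu"
      using less.hyps mu(2) by blast
    then show ?thesis using mu(1) by (meson converse_rtranclp_into_rtranclp)
  qed blast
qed

lemma beads_core:
  assumes t: "0 < t" and lam: "partition lam" "length lam \<le> L"
  shows "partition (core t lam) \<and> length (core t lam) \<le> L \<and>
         beads L (part (core t lam)) = push_up t (beads L (part lam))"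
proof -
  let ?P = "\<lambda>mu. (removes_rim_hook t)\<^sup>*\<^sup>* lam mu \<and> is_core t mu"
  have good: "partition mu \<and> length mu \<le> L \<and> beads L (part mu) = push_up t (beads L (part lam))"
    if "?P mu" for mu
  proof -
    have mu: "partition mu" "length mu \<le> L"
      "push_up t (beads L (part mu)) = push_up t (beads L (part lam))"
      using rim_hook_chain_push_up[OF t lam conjunct1[OF that]] by blast+
    have "bead_closed t (beads L (part mu))"
      using is_core_iff_bead_closed[OF mu(1,2) t] that by simp
    then show ?thesis using mu push_up_bead_closed[OF t finite_beads] by simp
  qed
  have uniq: "mu = nu" if "?P mu" "?P nu" for mu nu
    using good[OF that(1)] good[OF that(2)] beads_part_eq_iff[of mu L nu] by simp
  obtain mu where mu: "?P mu" using ex_rim_hook_chain_core[OF t lam] by blast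
  have "?P (core t lam)" unfolding core_def
  proof (rule theI)
    show "?P mu" by (fact mu)
    show "nu = mu" if "?P nu" for nu using uniq[OF that mu] .
  qed
  then show ?thesis using good by blast
qed

section \<open>Splitting the count along the runners of the d-abacus\<close>

definition bead_sets :: "nat \<Rightarrow> nat \<Rightarrow> nat set \<Rightarrow> nat set \<Rightarrow> nat set set" where
  "bead_sets u v A C = {X. finite X \<and> bead_closed (lcm u v) X \<and> push_up u X = A \<and> push_up v X = C}"

lemma N_count_eq_card_bead_sets:
  assumes u: "0 < u" and v: "0 < v"
    and \<alpha>: "partition \<alpha>" "length \<alpha> \<le> L" and \<gamma>: "partition \<gamma>" "length \<gamma> \<le> L"
  shows "N_count u v \<alpha> \<gamma> L = card (bead_sets u v (beads L (part \<alpha>)) (beads L (part \<gamma>)))"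
proof -
  let ?N = "{lam. is_core (lcm u v) lam \<and> core u lam = \<alpha> \<and> core v lam = \<gamma> \<and> length lam \<le> L}"
  let ?f = "\<lambda>lam. beads L (part lam)"
  have m: "0 < lcm u v" using u v by (simp add: lcm_pos_nat)
  have "bij_betw ?f ?N (bead_sets u v (?f \<alpha>) (?f \<gamma>))"
  proof (rule bij_betw_imageI)
    show "inj_on ?f ?N"
      by (rule inj_onI) (use beads_part_eq_iff in \<open>auto simp: is_core_def\<close>)
  next
    show "?f ` ?N = bead_sets u v (?f \<alpha>) (?f \<gamma>)"
    proof (intro set_eqI iffI)
      fix X assume "X \<in> ?f ` ?N"
      then obtain lam where lam: "is_core (lcm u v) lam" "core u lam = \<alpha>" "core v lam = \<gamma>"
        "length lam \<le> L" "X = ?f lam" by blast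
      have "partition lam" using lam(1) by (simp add: is_core_def)
      then show "X \<in> bead_sets u v (?f \<alpha>) (?f \<gamma>)"
        using is_core_iff_bead_closed[OF _ lam(4) m] beads_core[OF u _ lam(4)]
          beads_core[OF v _ lam(4)] lam
        by (simp add: bead_sets_def)
    next
      fix X assume "X \<in> bead_sets u v (?f \<alpha>) (?f \<gamma>)"
      then have X: "finite X" "bead_closed (lcm u v) X" "push_up u X = ?f \<alpha>" "push_up v X = ?f \<gamma>"
        by (auto simp: bead_sets_def)
      have "card X = L"
        using card_push_up[OF u X(1)] X(3) card_beads[OF antimono_part[OF \<alpha>(1)]] by simp
      then obtain lam where lam: "partition lam" "length lam \<le> L" "?f lam = X"
        using ex_partition_beads[OF X(1)] by blast
      have "is_core (lcm u v) lam" using is_core_iff_bead_closed[OF lam(1,2) m] X(2) lam(3) by simp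
      moreover have "core u lam = \<alpha>" "core v lam = \<gamma>"
        using beads_core[OF u lam(1,2)] beads_core[OF v lam(1,2)] beads_part_eq_iff[OF _ _ \<alpha>]
          beads_part_eq_iff[OF _ _ \<gamma>] X(3,4) lam(3) by auto
      ultimately show "X \<in> ?f ` ?N" using lam by blast
    qed
  qed
  then show ?thesis unfolding N_count_def by (rule bij_betw_same_card)
qed

definition runner :: "nat \<Rightarrow> nat \<Rightarrow> nat set \<Rightarrow> nat set" where
  "runner d j X = {y. d * y + j \<in> X}"

lemma runner_of_runners: "j < d \<Longrightarrow> runner d j {x. x div d \<in> F (x mod d)} = F j"
  unfolding runner_def by simp

lemma set_eq_iff_runners:
  assumes "0 < d"
  shows "X = Y \<longleftrightarrow> (\<forall>j<d. runner d j X = runner d j Y)"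
proof
  assume runners: "\<forall>j<d. runner d j X = runner d j Y"
  show "X = Y"
  proof (intro set_eqI)
    fix x
    have "x div d \<in> runner d (x mod d) X \<longleftrightarrow> x div d \<in> runner d (x mod d) Y"
      using runners assms by simp
    then show "x \<in> X \<longleftrightarrow> x \<in> Y" unfolding runner_def by simp
  qed
qed simp

lemma finite_iff_runners:
  assumes d: "0 < d"
  shows "finite X \<longleftrightarrow> (\<forall>j<d. finite (runner d j X))"
proof
  assume "finite X"
  then show "\<forall>j<d. finite (runner d j X)" unfolding runner_def
    by (auto intro: finite_vimageI[where h="\<lambda>y. d * y + _", unfolded vimage_def] simp: inj_on_def d)
next
  assume runners: "\<forall>j<d. finite (runner d j X)"
  have "X \<subseteq> (\<Union>j<d. (\<lambda>y. d * y + j) ` runner d j X)"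
  proof
    fix x assume "x \<in> X"
    then have "x div d \<in> runner d (x mod d) X" by (simp add: runner_def)
    then show "x \<in> (\<Union>j<d. (\<lambda>y. d * y + j) ` runner d j X)" using d
      by (intro UN_I[of "x mod d"]) (auto intro!: image_eqI[of _ _ "x div d"])
  qed
  then show "finite X"
    using runners by (meson finite_UN_I finite_imageI finite_lessThan finite_subset lessThan_iff)
qed

lemma bead_closed_mult_iff_runners:
  assumes d: "0 < d"
  shows "bead_closed (d * m) X \<longleftrightarrow> (\<forall>j<d. bead_closed m (runner d j X))"
proof
  assume closed: "bead_closed (d * m) X"
  show "\<forall>j<d. bead_closed m (runner d j X)" unfolding bead_closed_def runner_def
  proof (intro allI impI ballI, simp)
    fix j y assume "d * y + j \<in> X" "m \<le> y"
    moreover have "d * y + j - d * m = d * (y - m) + j"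
      using \<open>m \<le> y\<close> by (simp add: diff_mult_distrib2)
    moreover have "d * m \<le> d * y + j" using \<open>m \<le> y\<close> by (simp add: trans_le_add1)
    ultimately show "d * (y - m) + j \<in> X" using closed unfolding bead_closed_def by metis
  qed
next
  assume runners: "\<forall>j<d. bead_closed m (runner d j X)"
  show "bead_closed (d * m) X" unfolding bead_closed_def
  proof (intro ballI impI)
    fix x assume x: "x \<in> X" "d * m \<le> x"
    have "m \<le> x div d"
      using x d by (metis div_le_mono nonzero_mult_div_cancel_left not_gr0 less_not_refl)
    moreover have "x div d \<in> runner d (x mod d) X" using x by (simp add: runner_def)
    ultimately have "x div d - m \<in> runner d (x mod d) X"
      using runners d unfolding bead_closed_def by simp
    moreover have "d * (x div d - m) + x mod d = x - d * m"
      using \<open>m \<le> x div d\<close> by (simp add: diff_mult_distrib2)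
    ultimately show "x - d * m \<in> X" by (simp add: runner_def)
  qed
qed

lemma mod_mult_eq_iff:
  fixes z y u j d :: nat
  assumes "j < d"
  shows "z mod (d * u) = d * (y mod u) + j \<longleftrightarrow> z mod d = j \<and> z div d mod u = y mod u"
proof
  assume h: "z mod (d * u) = d * (y mod u) + j"
  have e: "z mod (d * u) = d * (z div d mod u) + z mod d" by (rule mod_mult2_eq)
  have "0 < d" using assms by simp
  then have "z mod d = j" using h e assms
    by (metis add.commute mod_less mod_mult_self2 mult.commute mod_less_divisor)
  then show "z mod d = j \<and> z div d mod u = y mod u" using h e assms by simp
qed (simp add: mod_mult2_eq)

lemma runner_push_up_mult:
  assumes d: "0 < d" and u: "0 < u" and j: "j < d"
  shows "runner d j (push_up (d * u) X) = push_up u (runner d j X)"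
proof (intro set_eqI)
  fix y
  have "(d * y + j) div (d * u) = y div u" "(d * y + j) mod (d * u) = d * (y mod u) + j"
    using d j by (simp_all add: div_mult2_eq mod_mult2_eq)
  moreover have "{z \<in> X. z mod (d * u) = d * (y mod u) + j} =
      (\<lambda>w. d * w + j) ` {w \<in> runner d j X. w mod u = y mod u}"
  proof (intro set_eqI iffI)
    fix z assume z: "z \<in> {z \<in> X. z mod (d * u) = d * (y mod u) + j}"
    then have "z mod d = j" "z div d mod u = y mod u" using mod_mult_eq_iff[OF j] by auto
    then show "z \<in> (\<lambda>w. d * w + j) ` {w \<in> runner d j X. w mod u = y mod u}"
      using z by (intro image_eqI[of _ _ "z div d"]) (auto simp: runner_def)
  qed (use d j in \<open>auto simp: runner_def mod_mult2_eq\<close>)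
  moreover have "inj_on (\<lambda>w. d * w + j) A" for A using d by (auto simp: inj_on_def)
  ultimately show "y \<in> runner d j (push_up (d * u) X) \<longleftrightarrow> y \<in> push_up u (runner d j X)"
    unfolding runner_def push_up_def runner_size_def by (simp add: card_image)
qed

lemma card_runner_push_up:
  assumes "0 < d" "j < d" "finite X"
  shows "card (runner d j (push_up d X)) = card (runner d j X)"
proof -
  have "runner d j (push_up d X) = push_up 1 (runner d j X)"
    using runner_push_up_mult[OF assms(1) _ assms(2), of 1 X] by simp
  moreover have "finite (runner d j X)" using finite_iff_runners[OF assms(1)] assms(2,3) by blast
  ultimately show ?thesis using card_push_up[of 1] by simp
qed

text \<open>Since lcm (d u) (d v) = d lcm u v, all three conditions defining the bead sets can be
  checked runner by runner on the d-abacus.\<close>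

lemma bead_sets_mult_iff_runners:
  assumes d: "0 < d" and u: "0 < u" and v: "0 < v"
  shows "X \<in> bead_sets (d * u) (d * v) A C \<longleftrightarrow>
    (\<forall>j<d. runner d j X \<in> bead_sets u v (runner d j A) (runner d j C))"
proof -
  have "push_up (d * u) X = A \<longleftrightarrow> (\<forall>j<d. push_up u (runner d j X) = runner d j A)"
    using set_eq_iff_runners[OF d, of "push_up (d * u) X" A] runner_push_up_mult[OF d u] by simp
  moreover have "push_up (d * v) X = C \<longleftrightarrow> (\<forall>j<d. push_up v (runner d j X) = runner d j C)"
    using set_eq_iff_runners[OF d, of "push_up (d * v) X" C] runner_push_up_mult[OF d v] by simp
  moreover note finite_iff_runners[OF d, of X] bead_closed_mult_iff_runners[OF d, of "lcm u v" X]
  moreover have lcm: "lcm (d * u) (d * v) = d * lcm u v" by (simp add: lcm_mult_left)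
  ultimately show ?thesis unfolding bead_sets_def mem_Collect_eq lcm by blast
qed

lemma card_bead_sets_mult:
  assumes d: "0 < d" and u: "0 < u" and v: "0 < v"
  shows "card (bead_sets (d * u) (d * v) A C) =
    (\<Prod>j<d. card (bead_sets u v (runner d j A) (runner d j C)))"
proof -
  let ?G = "bead_sets (d * u) (d * v) A C"
  let ?P = "Pi\<^sub>E {..<d} (\<lambda>j. bead_sets u v (runner d j A) (runner d j C))"
  let ?f = "\<lambda>X. restrict (\<lambda>j. runner d j X) {..<d}"
  let ?g = "\<lambda>F. {x. x div d \<in> F (x mod d)}"
  note mem = bead_sets_mult_iff_runners[OF d u v]
  have "bij_betw ?f ?G ?P"
  proof (rule bij_betw_byWitness[where f'="?g"])
    have "X = ?g (?f X)" for X
      by (rule set_eq_iff_runners[OF d, THEN iffD2])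
        (use runner_of_runners[of _ d "\<lambda>j. runner d j X"] in simp)
    then show "\<forall>X\<in>?G. ?g (?f X) = X" by simp
    show "\<forall>F\<in>?P. ?f (?g F) = F"
    proof
      fix F assume F: "F \<in> ?P"
      show "?f (?g F) = F"
      proof
        fix j show "?f (?g F) j = F j" using F runner_of_runners[of j d F] by (cases "j < d") auto
      qed
    qed
    show "?f ` ?G \<subseteq> ?P" using mem by auto
    show "?g ` ?P \<subseteq> ?G"
    proof
      fix X assume "X \<in> ?g ` ?P"
      then obtain F where "F \<in> ?P" "X = ?g F" by blast
      then show "X \<in> ?G" using mem runner_of_runners by auto
    qed
  qed
  then have "card ?G = card ?P" by (rule bij_betw_same_card)
  then show ?thesis by (simp add: card_PiE)
qed

definition partition_of_beads :: "nat set \<Rightarrow> nat list" where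
  "partition_of_beads X =
    (THE lam. partition lam \<and> length lam \<le> card X \<and> beads (card X) (part lam) = X)"

lemma partition_of_beads_eqI:
  assumes "partition lam" "length lam \<le> L"
  shows "partition_of_beads (beads L (part lam)) = lam"
  unfolding partition_of_beads_def card_beads[OF antimono_part[OF assms(1)]]
  using assms beads_part_eq_iff by (intro the_equality) auto

lemma beads_partition_of_beads:
  assumes "finite X"
  shows "partition (partition_of_beads X) \<and> length (partition_of_beads X) \<le> card X \<and>
    beads (card X) (part (partition_of_beads X)) = X"
proof -
  obtain lam where lam: "partition lam" "length lam \<le> card X" "beads (card X) (part lam) = X"
    using ex_partition_beads[OF assms refl] by blast
  then have "partition_of_beads X = lam" using partition_of_beads_eqI[OF lam(1,2)] by simp
  then show ?thesis using lam by simp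
qed

lemma partition_of_beads_add:
  assumes "finite X"
  shows "partition_of_beads ((\<lambda>x. x + e) ` X \<union> {..<e}) = partition_of_beads X"
proof -
  let ?lam = "partition_of_beads X"
  have lam: "partition ?lam" "length ?lam \<le> card X" "beads (card X) (part ?lam) = X"
    using beads_partition_of_beads[OF assms] by auto
  then have "beads (card X + e) (part ?lam) = (\<lambda>x. x + e) ` X \<union> {..<e}"
    using beads_add[of "card X" "part ?lam" e] by (simp add: part_eq_0)
  then show ?thesis using partition_of_beads_eqI[of ?lam "card X + e"] lam by simp
qed

lemma card_shift_Un_lessThan:
  assumes "finite X"
  shows "card ((\<lambda>x. x + e) ` X \<union> {..<e}) = card X + e"
proof -
  have "(\<lambda>x. x + e) ` X \<inter> {..<e} = {}" by auto
  then show ?thesis using assms by (simp add: card_Un_disjoint card_image)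
qed

lemma runner_add:
  assumes "j < d"
  shows "runner d j ((\<lambda>x. x + d * e) ` X \<union> {..<d * e}) = (\<lambda>y. y + e) ` runner d j X \<union> {..<e}"
proof (intro set_eqI iffI)
  fix y assume y: "y \<in> runner d j ((\<lambda>x. x + d * e) ` X \<union> {..<d * e})"
  show "y \<in> (\<lambda>y. y + e) ` runner d j X \<union> {..<e}"
  proof (cases "y < e")
    case False
    then have "d * e \<le> d * y" by simp
    then have "\<not> d * y + j < d * e" by linarith
    then obtain x where x: "x \<in> X" "d * y + j = x + d * e" using y by (auto simp: runner_def)
    then have "x = d * (y - e) + j" using False by (simp add: diff_mult_distrib2)
    then show ?thesis
      using x False by (intro UnI1 image_eqI[of _ _ "y - e"]) (auto simp: runner_def)
  qed simp
next
  fix y assume y: "y \<in> (\<lambda>y. y + e) ` runner d j X \<union> {..<e}"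
  show "y \<in> runner d j ((\<lambda>x. x + d * e) ` X \<union> {..<d * e})"
  proof (cases "y < e")
    case True
    have "d * y + j < d * Suc y" using assms by simp
    also have "d * Suc y \<le> d * e" using True by (intro mult_le_mono2) simp
    finally show ?thesis by (simp add: runner_def)
  next
    case False
    then obtain w where "w \<in> runner d j X" "y = w + e" using y by auto
    then show ?thesis by (auto simp: runner_def algebra_simps intro!: image_eqI[of _ _ "d * w + j"])
  qed
qed

text \<open>The d-quotient of lam read off an abacus with L beads (the paper's \<sigma>^i_j and l^i_j for
  L = i): runner j of the d-abacus carries quot_beads d L lam j beads, which encode the
  partition quot d L lam j.\<close>

definition quot :: "nat \<Rightarrow> nat \<Rightarrow> nat list \<Rightarrow> nat \<Rightarrow> nat list" where
  "quot d L lam j = partition_of_beads (runner d j (beads L (part lam)))"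

definition quot_beads :: "nat \<Rightarrow> nat \<Rightarrow> nat list \<Rightarrow> nat \<Rightarrow> nat" where
  "quot_beads d L lam j = card (runner d j (beads L (part lam)))"

lemma beads_quot:
  assumes "0 < d" "j < d"
  shows "partition (quot d L lam j) \<and> length (quot d L lam j) \<le> quot_beads d L lam j \<and>
    beads (quot_beads d L lam j) (part (quot d L lam j)) = runner d j (beads L (part lam))"
proof -
  have "finite (runner d j (beads L (part lam)))"
    using finite_iff_runners[OF assms(1), of "beads L (part lam)"] assms(2) by simp
  then show ?thesis unfolding quot_def quot_beads_def by (rule beads_partition_of_beads)
qed

lemma is_core_quot:
  assumes d: "0 < d" "j < d" and u: "0 < u" and lam: "is_core (d * u) lam" "length lam \<le> L"
  shows "is_core u (quot d L lam j)"
proof -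
  have "partition lam" using lam(1) by (simp add: is_core_def)
  then have "bead_closed (d * u) (beads L (part lam))"
    using is_core_iff_bead_closed[OF _ lam(2)] lam(1) d u by simp
  then have "bead_closed u (runner d j (beads L (part lam)))"
    using bead_closed_mult_iff_runners[OF d(1)] d(2) by blast
  moreover have "partition (quot d L lam j)"
    "length (quot d L lam j) \<le> quot_beads d L lam j"
    "beads (quot_beads d L lam j) (part (quot d L lam j)) = runner d j (beads L (part lam))"
    using beads_quot[OF d, of L lam] by auto
  ultimately show ?thesis using is_core_iff_bead_closed[of "quot d L lam j" _ u] u by simp
qed

lemma quot_add:
  assumes "j < d" "length lam \<le> L"
  shows "quot d (L + d * e) lam j = quot d L lam j"
    and "quot_beads d (L + d * e) lam j = quot_beads d L lam j + e"
proof -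
  have "runner d j (beads (L + d * e) (part lam)) =
      (\<lambda>y. y + e) ` runner d j (beads L (part lam)) \<union> {..<e}"
    using beads_add[of L "part lam" "d * e"] runner_add[OF assms(1)] assms(2)
    by (simp add: part_eq_0)
  moreover have "0 < d" using assms(1) by simp
  then have "finite (runner d j (beads L (part lam)))"
    using finite_iff_runners assms(1) finite_beads by blast
  ultimately show "quot d (L + d * e) lam j = quot d L lam j"
    and "quot_beads d (L + d * e) lam j = quot_beads d L lam j + e"
    unfolding quot_def quot_beads_def
    by (simp_all add: partition_of_beads_add card_shift_Un_lessThan)
qed

lemma N_count_mult_eq_prod_quotients:
  assumes d: "0 < d" and u: "0 < u" and v: "0 < v"
    and \<alpha>: "partition \<alpha>" "length \<alpha> \<le> L" and \<gamma>: "partition \<gamma>" "length \<gamma> \<le> L"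
    and cores: "core d \<alpha> = core d \<gamma>"
  shows "N_count (d * u) (d * v) \<alpha> \<gamma> L =
    (\<Prod>j<d. N_count u v (quot d L \<alpha> j) (quot d L \<gamma> j) (quot_beads d L \<alpha> j))"
proof -
  have "N_count (d * u) (d * v) \<alpha> \<gamma> L =
      (\<Prod>j<d. card (bead_sets u v (runner d j (beads L (part \<alpha>))) (runner d j (beads L (part \<gamma>)))))"
    using N_count_eq_card_bead_sets[OF _ _ \<alpha> \<gamma>] card_bead_sets_mult[OF d u v] d u v by simp
  also have "\<dots> = (\<Prod>j<d. N_count u v (quot d L \<alpha> j) (quot d L \<gamma> j) (quot_beads d L \<alpha> j))"
  proof (rule prod.cong[OF refl])
    fix j assume "j \<in> {..<d}"
    then have j: "j < d" by simp
    \<comment> \<open>equal d-cores mean equally many beads on each runner of the d-abacus\<close>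
    have "quot_beads d L \<gamma> j = card (runner d j (push_up d (beads L (part \<gamma>))))"
      unfolding quot_beads_def using card_runner_push_up[OF d j] by simp
    also have "\<dots> = quot_beads d L \<alpha> j"
      unfolding quot_beads_def using beads_core[OF d \<alpha>] beads_core[OF d \<gamma>] cores
        card_runner_push_up[OF d j] by (metis finite_beads)
    finally show
      "card (bead_sets u v (runner d j (beads L (part \<alpha>))) (runner d j (beads L (part \<gamma>)))) =
        N_count u v (quot d L \<alpha> j) (quot d L \<gamma> j) (quot_beads d L \<alpha> j)"
      using N_count_eq_card_bead_sets[OF u v]
        beads_quot[OF d j, of L \<alpha>] beads_quot[OF d j, of L \<gamma>]
      by simp
  qed
  finally show ?thesis .
qed

lemma N_count_add_lcm_eq_prod_quotients:
  assumes d: "0 < d" and u: "0 < u" and v: "0 < v"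
    and \<alpha>: "partition \<alpha>" "length \<alpha> \<le> L" and \<gamma>: "partition \<gamma>" "length \<gamma> \<le> L"
    and cores: "core d \<alpha> = core d \<gamma>"
  shows "N_count (d * u) (d * v) \<alpha> \<gamma> (L + lcm (d * u) (d * v) * k) =
    (\<Prod>j<d. N_count u v (quot d L \<alpha> j) (quot d L \<gamma> j)
      (quot_beads d L \<alpha> j + lcm u v * k))"
proof -
  have m: "lcm (d * u) (d * v) * k = d * (lcm u v * k)" by (simp add: lcm_mult_left)
  have "N_count (d * u) (d * v) \<alpha> \<gamma> (L + lcm (d * u) (d * v) * k) =
      (\<Prod>j<d. N_count u v
        (quot d (L + d * (lcm u v * k)) \<alpha> j) (quot d (L + d * (lcm u v * k)) \<gamma> j)
        (quot_beads d (L + d * (lcm u v * k)) \<alpha> j))"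
    unfolding m using N_count_mult_eq_prod_quotients[OF d u v] \<alpha> \<gamma> cores by simp
  also have "\<dots> = (\<Prod>j<d. N_count u v (quot d L \<alpha> j) (quot d L \<gamma> j)
      (quot_beads d L \<alpha> j + lcm u v * k))"
    by (intro prod.cong refl) (simp add: quot_add \<alpha>(2) \<gamma>(2))
  finally show ?thesis .
qed

theorem theorem17:
  fixes s t :: nat and \<sigma> \<tau> :: "nat list"
  assumes "0 < s" and "0 < t"
    and "is_core s \<sigma>" and "is_core t \<tau>"
    and "core (gcd s t) \<sigma> = core (gcd s t) \<tau>"
  shows "\<forall>i \<ge> max (length \<sigma>) (length \<tau>).
           \<exists>\<sigma>' \<tau>' :: nat \<Rightarrow> nat list. \<exists>len' :: nat \<Rightarrow> nat.
             (\<forall>j < gcd s t. is_core (s div gcd s t) (\<sigma>' j) \<and> is_core (t div gcd s t) (\<tau>' j)) \<and>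
             (\<forall>k. N_count s t \<sigma> \<tau> (i + lcm s t * k) =
                  (\<Prod>j<gcd s t. N_count (s div gcd s t) (t div gcd s t) (\<sigma>' j) (\<tau>' j)
                                  (len' j + (lcm s t div gcd s t) * k)))"
proof (intro allI impI)
  fix i assume i: "max (length \<sigma>) (length \<tau>) \<le> i"
  define d u v where "d = gcd s t" and "u = s div d" and "v = t div d"
  have d: "0 < d" and s: "s = d * u" and t: "t = d * v"
    using assms(1) by (simp_all add: d_def u_def v_def)
  then have u: "0 < u" and v: "0 < v" using assms(1,2) by auto
  have \<sigma>: "partition \<sigma>" "length \<sigma> \<le> i" and \<tau>: "partition \<tau>" "length \<tau> \<le> i"
    using assms(3,4) i by (auto simp: is_core_def)
  have cores: "core d \<sigma> = core d \<tau>" using assms(5) by (simp add: d_def)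
  have "is_core u (quot d i \<sigma> j) \<and> is_core v (quot d i \<tau> j)" if "j < d" for j
    using is_core_quot[OF d that u] is_core_quot[OF d that v] assms(3,4) \<sigma>(2) \<tau>(2)
    unfolding s t by simp
  moreover have "N_count s t \<sigma> \<tau> (i + lcm s t * k) = (\<Prod>j<d. N_count u v
      (quot d i \<sigma> j) (quot d i \<tau> j) (quot_beads d i \<sigma> j + lcm u v * k))" for k
    unfolding s t by (rule N_count_add_lcm_eq_prod_quotients[OF d u v \<sigma> \<tau> cores])
  moreover have "lcm s t div d = lcm u v" unfolding s t using d by (simp add: lcm_mult_left)
  ultimately show "\<exists>\<sigma>' \<tau>' :: nat \<Rightarrow> nat list. \<exists>len' :: nat \<Rightarrow> nat.
             (\<forall>j < gcd s t. is_core (s div gcd s t) (\<sigma>' j) \<and> is_core (t div gcd s t) (\<tau>' j)) \<and>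
             (\<forall>k. N_count s t \<sigma> \<tau> (i + lcm s t * k) =
                  (\<Prod>j<gcd s t. N_count (s div gcd s t) (t div gcd s t) (\<sigma>' j) (\<tau>' j)
                                  (len' j + (lcm s t div gcd s t) * k)))"
    unfolding d_def[symmetric] u_def[symmetric] v_def[symmetric]
    by (intro exI[of _ "quot d i \<sigma>"] exI[of _ "quot d i \<tau>"]
        exI[of _ "quot_beads d i \<sigma>"]) simp
qed

end
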